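(* Let $p\in[1,\infty)$ and $f\in L_p(\mathbb R)$. Then $\lim_{|x|\to\infty}(Gf)(x)=0$ and $\lim_{|x|\to\infty}\frac{d}{dx}(Gf)(x)=0$.
   Context: Let $q:\mathbb R\to\mathbb R$ be measurable with $q\in L_1^{\mathrm{loc}}(\mathbb R)$ and $q(x)\ge1$ a.e. A principal fundamental system of solutions (PFSS) of $z''=q(x)z$ is a pair $u,v$ of solutions ($C^1$, derivative locally absolutely continuous, equation a.e.) such that for all $x$: $u>0$, $v>0$, $u'<0$, $v'>0$, $v'u-u'v=1$, $u(x)=v(x)\int_x^\infty v(t)^{-2}dt$, and $u,u'\to0$ as $x\to\infty$, $v,v'\to0$ as $x\to-\infty$, $v,v'\to\infty$ as $x\to\infty$, $u,|u'|\to\infty$ as $x\to-\infty$. Fix a PFSS $\{u,v\}$. The Green function is $G(x,t)=u(x)v(t)$ for $x\ge t$ and $G(x,t)=u(t)v(x)$ for $x\le t$, and $(Gf)(x)=\int_{-\infty}^\infty G(x,t)f(t)\,dt$. *)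

theory Defs
  imports "HOL-Analysis.Analysis"
begin

definition admissible_potential :: "(real \<Rightarrow> real) \<Rightarrow> bool" where
  "admissible_potential q \<longleftrightarrow>
     q \<in> borel_measurable lborel \<and>
     (\<forall>a b. set_integrable lborel {a..b} q) \<and>
     (AE x in lborel. 1 \<le> q x)"

text \<open>z is a solution of z'' = q z with derivative z': z is C^1 with derivative z',
  and z' is locally absolutely continuous with z'' = q z a.e.; the latter is written
  in its integral form z'(y) - z'(x) = integral of q z over [x,y].\<close>
definition is_solution ::
  "(real \<Rightarrow> real) \<Rightarrow> (real \<Rightarrow> real) \<Rightarrow> (real \<Rightarrow> real) \<Rightarrow> bool" where
  "is_solution q z z' \<longleftrightarrow>
     (\<forall>x. (z has_real_derivative z' x) (at x)) \<and>
     continuous_on UNIV z' \<and>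
     (\<forall>x y. x \<le> y \<longrightarrow>
        set_integrable lborel {x..y} (\<lambda>t. q t * z t) \<and>
        z' y - z' x = (LINT t:{x..y}|lborel. q t * z t))"

definition PFSS ::
  "(real \<Rightarrow> real) \<Rightarrow> (real \<Rightarrow> real) \<Rightarrow> (real \<Rightarrow> real) \<Rightarrow>
   (real \<Rightarrow> real) \<Rightarrow> (real \<Rightarrow> real) \<Rightarrow> bool" where
  "PFSS q u u' v v' \<longleftrightarrow>
     is_solution q u u' \<and> is_solution q v v' \<and>
     (\<forall>x. u x > 0 \<and> v x > 0 \<and> u' x < 0 \<and> v' x > 0 \<and>
          v' x * u x - u' x * v x = 1 \<and>
          set_integrable lborel {x..} (\<lambda>t. 1 / (v t)\<^sup>2) \<and>
          u x = v x * (LINT t:{x..}|lborel. 1 / (v t)\<^sup>2)) \<and>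
     (u \<longlongrightarrow> 0) at_top \<and> (u' \<longlongrightarrow> 0) at_top \<and>
     (v \<longlongrightarrow> 0) at_bot \<and> (v' \<longlongrightarrow> 0) at_bot \<and>
     filterlim v at_top at_top \<and> filterlim v' at_top at_top \<and>
     filterlim u at_top at_bot \<and> filterlim (\<lambda>x. \<bar>u' x\<bar>) at_top at_bot"

definition green :: "(real \<Rightarrow> real) \<Rightarrow> (real \<Rightarrow> real) \<Rightarrow> real \<Rightarrow> real \<Rightarrow> real" where
  "green u v x t = (if t \<le> x then u x * v t else u t * v x)"

definition green_op ::
  "(real \<Rightarrow> real) \<Rightarrow> (real \<Rightarrow> real) \<Rightarrow> (real \<Rightarrow> real) \<Rightarrow> real \<Rightarrow> real" where
  "green_op u v f x = (LINT t|lborel. green u v x t * f t)"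

definition in_Lp :: "real \<Rightarrow> (real \<Rightarrow> real) \<Rightarrow> bool" where
  "in_Lp p f \<longleftrightarrow> f \<in> borel_measurable lborel \<and> integrable lborel (\<lambda>x. \<bar>f x\<bar> powr p)"

end

theory Submission
  imports Defs "HOL-Probability.Sinc_Integral" "HOL-Real_Asymp.Real_Asymp"
begin

text \<open>
  Comparing u'' = q u and v'' = q v with z'' = z in integral form (q \<ge> 1), and using
  u + u' \<rightarrow> 0 at +\<infinity> and v' - v \<rightarrow> 0 at -\<infinity>, gives u' \<le> -u and v \<le> v'. So u decays and v
  grows at least exponentially, and the Wronskian v'u - u'v = 1 then bounds both G(x,t) and
  its x-derivative by exp (- \<bar>x - t\<bar>). Hence Gf and (Gf)' are dominated by the convolution
  of \<bar>f\<bar> with exp (- \<bar>s\<bar>), which vanishes at infinity for f \<in> L_p: split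
  \<bar>f\<bar> \<le> \<epsilon> + \<epsilon>^(1-p) \<bar>f\<bar>^p and apply dominated convergence to the L_1 function \<bar>f\<bar>^p.
  Differentiation under the integral is again dominated convergence, because G(-,t) is
  Lipschitz near x with constant exp (1 - \<bar>x - t\<bar>).
\<close>

lemma integrable_exp_neg_abs: "integrable lborel (\<lambda>s::real. exp (- \<bar>s\<bar>))"
proof -
  let ?g = "\<lambda>s::real. exp (- s) * indicator {0..} s"
  have g: "integrable lborel ?g"
    using has_bochner_integral_I0i_power_exp_m'[of 0] by (simp add: integrable.intros)
  then have "integrable lborel (\<lambda>s. ?g (0 + (-1) * s))"
    using lborel_integrable_real_affine_iff[of "-1" ?g 0] by simp
  with g have "integrable lborel (\<lambda>s. ?g s + ?g (0 + (-1) * s))"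
    by (rule Bochner_Integration.integrable_add)
  then show ?thesis
    by (rule Bochner_Integration.integrable_bound) (auto split: split_indicator)
qed

lemma integrable_exp_neg_abs_diff: "integrable lborel (\<lambda>t. exp (- \<bar>(x::real) - t\<bar>))"
  using lborel_integrable_real_affine_iff[of "-1" "\<lambda>s. exp (- \<bar>s\<bar>)" x] integrable_exp_neg_abs
  by simp

lemma integral_exp_neg_abs_diff:
  "(LINT t|lborel. exp (- \<bar>(x::real) - t\<bar>)) = (LINT s|lborel. exp (- \<bar>s\<bar>))"
  using lborel_integral_real_affine[of "-1" "\<lambda>s. exp (- \<bar>s\<bar>)" x] by simp

lemma integrable_mult_dominated:
  fixes k f w :: "real \<Rightarrow> real"
  assumes [measurable]: "k \<in> borel_measurable borel" "f \<in> borel_measurable borel"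
    and w: "integrable lborel (\<lambda>t. w t * \<bar>f t\<bar>)"
    and k: "\<And>t. \<bar>k t\<bar> \<le> w t"
  shows "integrable lborel (\<lambda>t. k t * f t)"
    and "\<bar>LINT t|lborel. k t * f t\<bar> \<le> (LINT t|lborel. w t * \<bar>f t\<bar>)"
proof -
  have w0: "0 \<le> w t" for t
    using k[of t] by (meson abs_ge_zero order_trans)
  have bound: "\<bar>k t * f t\<bar> \<le> w t * \<bar>f t\<bar>" for t
    using k[of t] by (simp add: abs_mult mult_right_mono)
  show int: "integrable lborel (\<lambda>t. k t * f t)"
    using w by (rule Bochner_Integration.integrable_bound) (use bound w0 in \<open>auto simp: abs_mult\<close>)
  have "\<bar>LINT t|lborel. k t * f t\<bar> \<le> (LINT t|lborel. \<bar>k t * f t\<bar>)"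
    using integral_norm_bound[of lborel "\<lambda>t. k t * f t"] by simp
  also have "\<dots> \<le> (LINT t|lborel. w t * \<bar>f t\<bar>)"
    using int w bound by (intro integral_mono) auto
  finally show "\<bar>LINT t|lborel. k t * f t\<bar> \<le> (LINT t|lborel. w t * \<bar>f t\<bar>)" .
qed

lemma integral_dominated_convergence_at:
  fixes s :: "real \<Rightarrow> real \<Rightarrow> real" and g w :: "real \<Rightarrow> real"
  assumes "\<And>y. s y \<in> borel_measurable lborel" "g \<in> borel_measurable lborel"
    and "integrable lborel w"
    and lim: "AE t in lborel. ((\<lambda>y. s y t) \<longlongrightarrow> g t) (at x)"
    and bound: "\<forall>\<^sub>F y in at x. \<forall>t. \<bar>s y t\<bar> \<le> w t"
  shows "((\<lambda>y. LINT t|lborel. s y t) \<longlongrightarrow> (LINT t|lborel. g t)) (at x)"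
proof (subst tendsto_at_iff_sequentially, intro allI impI)
  fix X :: "nat \<Rightarrow> real"
  assume "\<forall>i. X i \<in> UNIV - {x}" and "X \<longlonglongrightarrow> x"
  then have X: "filterlim X (at x) sequentially"
    by (auto simp: filterlim_at)
  from filterlim_iff[THEN iffD1, OF X, rule_format, OF bound]
  obtain N where N: "\<And>n. N \<le> n \<Longrightarrow> \<forall>t. \<bar>s (X n) t\<bar> \<le> w t"
    by (auto simp: eventually_sequentially)
  have "(\<lambda>n. LINT t|lborel. s (X (n + N)) t) \<longlonglongrightarrow> (LINT t|lborel. g t)"
  proof (rule integral_dominated_convergence[where w = w])
    show "AE t in lborel. norm (s (X (n + N)) t) \<le> w t" for n
      using N[of "n + N"] by auto
    show "AE t in lborel. (\<lambda>n. s (X (n + N)) t) \<longlonglongrightarrow> g t"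
      using lim by eventually_elim
        (intro LIMSEQ_ignore_initial_segment filterlim_compose[OF _ X])
  qed (use assms in auto)
  then show "((\<lambda>y. LINT t|lborel. s y t) \<circ> X) \<longlonglongrightarrow> (LINT t|lborel. g t)"
    unfolding comp_def by (rule LIMSEQ_offset)
qed

lemma integral_le_increment_imp_nonpos:
  fixes \<phi> :: "real \<Rightarrow> real"
  assumes cont: "continuous_on UNIV \<phi>"
    and incr: "\<And>x y. x \<le> y \<Longrightarrow> (LINT t:{x..y}|lborel. \<phi> t) \<le> \<phi> y - \<phi> x"
    and lim: "(\<phi> \<longlongrightarrow> 0) at_top"
  shows "\<phi> x \<le> 0"
proof (rule ccontr)
  assume "\<not> \<phi> x \<le> 0"
  then have c: "\<phi> x > 0" by simp
  \<comment> \<open>Let z be the first point after x with \<phi> z \<le> \<phi> x / 2; on [x, z] the integral of \<phi> is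
    nonnegative, so \<phi> z \<ge> \<phi> x.\<close>
  obtain N where N: "\<And>y. N \<le> y \<Longrightarrow> \<phi> y < \<phi> x / 2"
    using order_tendstoD(2)[OF lim, of "\<phi> x / 2"] c by (auto simp: eventually_at_top_linorder)
  define S where "S = {x..max N x} \<inter> \<phi> -` {..\<phi> x / 2}"
  define z where "z = Inf S"
  have "closed S"
    unfolding S_def using cont
    by (intro closed_Int closed_atLeastAtMost continuous_closed_vimage closed_atMost)
      (auto simp: continuous_on_eq_continuous_at)
  moreover have "max N x \<in> S" "bdd_below S"
    using N[of "max N x"] unfolding S_def by auto
  ultimately have "z \<in> S"
    unfolding z_def by (intro closed_contains_Inf) auto
  then have xz: "x \<le> z" and z: "\<phi> z \<le> \<phi> x / 2"
    unfolding S_def by auto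
  have zN: "z \<le> max N x"
    unfolding z_def using cInf_lower[OF \<open>max N x \<in> S\<close> \<open>bdd_below S\<close>] .
  have "\<phi> s > 0" if "x \<le> s" "s < z" for s
  proof (rule ccontr)
    assume "\<not> \<phi> s > 0"
    then have "s \<in> S" using that zN c unfolding S_def by auto
    then show False using that cInf_lower[OF _ \<open>bdd_below S\<close>] unfolding z_def by fastforce
  qed
  then have "0 \<le> (LINT t:{x..z}|lborel. \<phi> t)"
    unfolding set_lebesgue_integral_def using AE_lborel_singleton[of z]
    by (intro integral_nonneg_AE) (auto elim!: eventually_mono split: split_indicator
        intro: less_imp_le simp: order.order_iff_strict)
  with incr[OF xz] z c show False by simp
qed

lemma neg_integral_le_increment_imp_nonneg:
  fixes \<psi> :: "real \<Rightarrow> real"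
  assumes cont: "continuous_on UNIV \<psi>"
    and incr: "\<And>x y. x \<le> y \<Longrightarrow> - (LINT t:{x..y}|lborel. \<psi> t) \<le> \<psi> y - \<psi> x"
    and lim: "(\<psi> \<longlongrightarrow> 0) at_bot"
  shows "0 \<le> \<psi> x"
proof -
  have "- \<psi> (- (- x)) \<le> 0"
  proof (rule integral_le_increment_imp_nonpos[where \<phi> = "\<lambda>s. - \<psi> (- s)"])
    show "continuous_on UNIV (\<lambda>s. - \<psi> (- s))"
      using cont by (auto intro!: continuous_intros continuous_on_compose2[OF cont])
    show "((\<lambda>s. - \<psi> (- s)) \<longlongrightarrow> 0) at_top"
      using tendsto_minus[OF lim[unfolded filterlim_at_bot_mirror]] by simp
    fix a b :: real
    assume "a \<le> b"
    have "{s. - s \<in> {- b..- a}} = {a..b}"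
      by auto
    then have "(LINT t:{- b..- a}|lborel. \<psi> t) = (LINT t:{a..b}|lborel. \<psi> (- t))"
      unfolding set_integral_reflect[of "{- b..- a}" \<psi>] by simp
    then have "(LINT t:{a..b}|lborel. - \<psi> (- t)) = - (LINT t:{- b..- a}|lborel. \<psi> t)"
      by (simp add: set_lebesgue_integral_def)
    then show "(LINT t:{a..b}|lborel. - \<psi> (- t)) \<le> - \<psi> (- b) - - \<psi> (- a)"
      using incr[of "- b" "- a"] \<open>a \<le> b\<close> by simp
  qed
  then show ?thesis by simp
qed

lemma is_solution_continuous: "is_solution q z z' \<Longrightarrow> continuous_on UNIV z"
  unfolding is_solution_def
  by (auto simp: continuous_on_eq_continuous_at intro: DERIV_isCont)

lemma is_solution_integral_deriv:
  assumes "is_solution q z z'" "x \<le> y"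
  shows "(LINT t:{x..y}|lborel. z' t) = z y - z x"
  unfolding set_lebesgue_integral_def
proof (rule integral_FTC_atLeastAtMost[OF \<open>x \<le> y\<close>])
  show "(z has_vector_derivative z' t) (at t within {x..y})" for t
    using assms(1) unfolding is_solution_def
    by (auto simp: has_real_derivative_iff_has_vector_derivative intro: has_vector_derivative_at_within)
  show "continuous_on {x..y} z'"
    using assms(1) unfolding is_solution_def by (auto intro: continuous_on_subset)
qed

lemma is_solution_integral_le_deriv_increment:
  assumes sol: "is_solution q z z'" and q: "AE t in lborel. 1 \<le> q t"
    and pos: "\<And>t. 0 < z t" and "x \<le> y"
  shows "(LINT t:{x..y}|lborel. z t) \<le> z' y - z' x"
proof -
  have "(LINT t:{x..y}|lborel. z t) \<le> (LINT t:{x..y}|lborel. q t * z t)"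
  proof (rule set_integral_mono_AE)
    show "set_integrable lborel {x..y} z"
      using is_solution_continuous[OF sol]
      by (intro borel_integrable_atLeastAtMost') (auto intro: continuous_on_subset)
    show "set_integrable lborel {x..y} (\<lambda>t. q t * z t)"
      using sol \<open>x \<le> y\<close> unfolding is_solution_def by blast
    show "AE t\<in>{x..y} in lborel. z t \<le> q t * z t"
      using q by eventually_elim (use pos in \<open>auto intro: mult_right_mono[of 1, simplified]\<close>)
  qed
  also have "\<dots> = z' y - z' x"
    using sol \<open>x \<le> y\<close> unfolding is_solution_def by simp
  finally show ?thesis .
qed

lemma deriv_le_neg_imp_exp_decay:
  fixes f f' :: "real \<Rightarrow> real"
  assumes f': "\<And>s. (f has_real_derivative f' s) (at s)" and le: "\<And>s. f' s \<le> - f s"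
    and "t \<le> z"
  shows "f z \<le> f t * exp (t - z)"
proof -
  have "exp z * f z \<le> exp t * f t"
  proof (rule DERIV_nonpos_imp_nonincreasing[OF \<open>t \<le> z\<close>])
    fix s
    have "((\<lambda>s. exp s * f s) has_real_derivative exp s * (f s + f' s)) (at s)"
      by (auto intro!: derivative_eq_intros f' simp: algebra_simps)
    moreover have "exp s * (f s + f' s) \<le> 0"
      using le[of s] by (simp add: mult_nonneg_nonpos)
    ultimately show "\<exists>d. ((\<lambda>s. exp s * f s) has_real_derivative d) (at s) \<and> d \<le> 0"
      by blast
  qed
  then show ?thesis
    by (simp add: exp_diff field_simps)
qed

lemma deriv_ge_imp_exp_growth:
  fixes f f' :: "real \<Rightarrow> real"
  assumes f': "\<And>s. (f has_real_derivative f' s) (at s)" and le: "\<And>s. f s \<le> f' s"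
    and "t \<le> z"
  shows "f t \<le> f z * exp (t - z)"
proof -
  have "((\<lambda>s. f (- s)) has_real_derivative - f' (- s)) (at s)" for s
    using f'[of "- s"] DERIV_mirror by blast
  from deriv_le_neg_imp_exp_decay[OF this, of "- z" "- t"] le \<open>t \<le> z\<close>
  show ?thesis by simp
qed

definition green_dx ::
  "(real \<Rightarrow> real) \<Rightarrow> (real \<Rightarrow> real) \<Rightarrow> (real \<Rightarrow> real) \<Rightarrow> (real \<Rightarrow> real) \<Rightarrow> real \<Rightarrow> real \<Rightarrow> real"
  where "green_dx u u' v v' x t = (if t \<le> x then u' x * v t else u t * v' x)"

locale principal_system =
  fixes q u u' v v' :: "real \<Rightarrow> real"
  assumes admissible: "admissible_potential q" and pfss: "PFSS q u u' v v'"
begin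

lemma u_solution: "is_solution q u u'" and v_solution: "is_solution q v v'"
  using pfss unfolding PFSS_def by blast+

lemma u_deriv: "(u has_real_derivative u' x) (at x)"
  and v_deriv: "(v has_real_derivative v' x) (at x)"
  using u_solution v_solution unfolding is_solution_def by blast+

lemma u_pos: "0 < u x" and v_pos: "0 < v x" and u'_neg: "u' x < 0" and v'_pos: "0 < v' x"
  and wronskian: "v' x * u x - u' x * v x = 1"
  using pfss unfolding PFSS_def by blast+

lemma u_measurable [measurable]: "u \<in> borel_measurable borel"
  and v_measurable [measurable]: "v \<in> borel_measurable borel"
  using is_solution_continuous[OF u_solution] is_solution_continuous[OF v_solution]
  by (auto intro: borel_measurable_continuous_onI)

lemma q_ge_1: "AE t in lborel. 1 \<le> q t"
  using admissible unfolding admissible_potential_def by blast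

lemma u'_le_neg_u: "u' x \<le> - u x"
proof -
  have "u x + u' x \<le> 0"
  proof (rule integral_le_increment_imp_nonpos[where \<phi> = "\<lambda>x. u x + u' x"])
    show "continuous_on UNIV (\<lambda>x. u x + u' x)"
      using u_solution unfolding is_solution_def
      by (intro continuous_intros is_solution_continuous[OF u_solution]) auto
    show "((\<lambda>x. u x + u' x) \<longlongrightarrow> 0) at_top"
      using pfss tendsto_add[of u 0 at_top u' 0] unfolding PFSS_def by simp
    fix x y :: real
    assume "x \<le> y"
    have "(LINT t:{x..y}|lborel. u t + u' t) = (LINT t:{x..y}|lborel. u t) + (LINT t:{x..y}|lborel. u' t)"
      using u_solution is_solution_continuous[OF u_solution] unfolding is_solution_def
      by (intro set_integral_add borel_integrable_atLeastAtMost') (auto intro: continuous_on_subset)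
    then show "(LINT t:{x..y}|lborel. u t + u' t) \<le> (u y + u' y) - (u x + u' x)"
      using is_solution_integral_le_deriv_increment[OF u_solution q_ge_1 u_pos \<open>x \<le> y\<close>]
        is_solution_integral_deriv[OF u_solution \<open>x \<le> y\<close>]
      by simp
  qed
  then show ?thesis by simp
qed

lemma v_le_v': "v x \<le> v' x"
proof -
  have "0 \<le> v' x - v x"
  proof (rule neg_integral_le_increment_imp_nonneg[where \<psi> = "\<lambda>x. v' x - v x"])
    show "continuous_on UNIV (\<lambda>x. v' x - v x)"
      using v_solution unfolding is_solution_def
      by (intro continuous_intros is_solution_continuous[OF v_solution]) auto
    show "((\<lambda>x. v' x - v x) \<longlongrightarrow> 0) at_bot"
      using pfss tendsto_diff[of v' 0 at_bot v 0] unfolding PFSS_def by simp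
    fix x y :: real
    assume "x \<le> y"
    have "(LINT t:{x..y}|lborel. v' t - v t) = (LINT t:{x..y}|lborel. v' t) - (LINT t:{x..y}|lborel. v t)"
      using v_solution is_solution_continuous[OF v_solution] unfolding is_solution_def
      by (intro set_integral_diff borel_integrable_atLeastAtMost') (auto intro: continuous_on_subset)
    then show "- (LINT t:{x..y}|lborel. v' t - v t) \<le> (v' y - v y) - (v' x - v x)"
      using is_solution_integral_le_deriv_increment[OF v_solution q_ge_1 v_pos \<open>x \<le> y\<close>]
        is_solution_integral_deriv[OF v_solution \<open>x \<le> y\<close>]
      by simp
  qed
  then show ?thesis by simp
qed

lemma u_decay: "t \<le> z \<Longrightarrow> u z \<le> u t * exp (t - z)"
  using deriv_le_neg_imp_exp_decay[OF u_deriv u'_le_neg_u] .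

lemma v_decay: "t \<le> z \<Longrightarrow> v t \<le> v z * exp (t - z)"
  using deriv_ge_imp_exp_growth[OF v_deriv v_le_v'] .

lemma u_mult_v_le: "u x * v x \<le> 1 / 2"
  using wronskian[of x] mult_right_mono[OF v_le_v' u_pos[THEN less_imp_le], of x x]
    mult_right_mono[OF u'_le_neg_u v_pos[THEN less_imp_le], of x x]
  by (simp add: algebra_simps)

lemma neg_u'_mult_v_le: "- u' x * v x \<le> 1"
  using wronskian[of x] mult_pos_pos[OF v'_pos u_pos, of x x] by simp

lemma v'_mult_u_le: "v' x * u x \<le> 1"
  using wronskian[of x] mult_neg_pos[OF u'_neg v_pos, of x x] by simp

lemma green_nonneg: "0 \<le> green u v x t"
  using u_pos v_pos by (simp add: green_def less_imp_le)

lemma green_le: "green u v x t \<le> exp (- \<bar>x - t\<bar>) / 2"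
proof (cases "t \<le> x")
  case True
  have "u x * v t \<le> u x * (v x * exp (t - x))"
    using v_decay[OF True] u_pos[of x] by (intro mult_left_mono) auto
  also have "\<dots> \<le> exp (t - x) / 2"
    using u_mult_v_le[of x] by (simp add: mult.assoc[symmetric])
  finally show ?thesis
    using True by (simp add: green_def)
next
  case False
  have "u t * v x \<le> u x * exp (x - t) * v x"
    using u_decay[of x t] False v_pos[of x] by (intro mult_right_mono) auto
  also have "\<dots> \<le> exp (x - t) / 2"
    using u_mult_v_le[of x] by (simp add: mult.commute mult.left_commute)
  finally show ?thesis
    using False by (simp add: green_def)
qed

lemma abs_green_le: "\<bar>green u v x t\<bar> \<le> exp (- \<bar>x - t\<bar>)"
  using green_nonneg[of x t] green_le[of x t] by simp

lemma abs_green_dx_le: "\<bar>green_dx u u' v v' x t\<bar> \<le> exp (- \<bar>x - t\<bar>)"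
proof (cases "t \<le> x")
  case True
  have "\<bar>u' x * v t\<bar> = - u' x * v t"
    using u'_neg[of x] v_pos[of t] by (simp add: abs_mult)
  also have "\<dots> \<le> - u' x * (v x * exp (t - x))"
    using v_decay[OF True] u'_neg[of x] by (intro mult_left_mono) auto
  also have "\<dots> \<le> exp (t - x)"
    using mult_right_mono[OF neg_u'_mult_v_le[of x], of "exp (t - x)"] by (simp add: mult.assoc)
  finally show ?thesis
    using True by (simp add: green_dx_def)
next
  case False
  have "\<bar>u t * v' x\<bar> = u t * v' x"
    using u_pos[of t] v'_pos[of x] by (simp add: abs_mult)
  also have "\<dots> \<le> u x * exp (x - t) * v' x"
    using u_decay[of x t] False v'_pos[of x] by (intro mult_right_mono) auto
  also have "\<dots> \<le> exp (x - t)"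
    using v'_mult_u_le[of x] by (simp add: mult.commute mult.left_commute)
  finally show ?thesis
    using False by (simp add: green_dx_def)
qed

lemma u_increment_mult_v_le:
  assumes "t \<le> a" "a \<le> b"
  shows "\<bar>u b - u a\<bar> * v t \<le> (b - a) * exp (t - a)"
proof (cases "a = b")
  case False
  then have "a < b" using assms by simp
  then obtain z where z: "a < z" "z < b" "u b - u a = (b - a) * u' z"
    using MVT2[of a b u u'] u_deriv by blast
  have "\<bar>u b - u a\<bar> * v t = (b - a) * (- u' z * v t)"
    using z u'_neg[of z] by (simp add: abs_mult)
  also have "- u' z * v t \<le> - u' z * v z * exp (t - z)"
    using v_decay[of t z] assms z u'_neg[of z] by (simp add: mult.assoc mult_left_mono)
  also have "\<dots> \<le> 1 * exp (t - a)"
    using neg_u'_mult_v_le[of z] z by (intro mult_mono) auto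
  finally show ?thesis using \<open>a < b\<close> by (simp add: mult_left_mono)
qed simp

lemma v_increment_mult_u_le:
  assumes "a \<le> b" "b \<le> t"
  shows "\<bar>v b - v a\<bar> * u t \<le> (b - a) * exp (b - t)"
proof (cases "a = b")
  case False
  then have "a < b" using assms by simp
  then obtain z where z: "a < z" "z < b" "v b - v a = (b - a) * v' z"
    using MVT2[of a b v v'] v_deriv by blast
  have "\<bar>v b - v a\<bar> * u t = (b - a) * (v' z * u t)"
    using z v'_pos[of z] by (simp add: abs_mult)
  also have "v' z * u t \<le> v' z * u z * exp (z - t)"
    using u_decay[of z t] assms z v'_pos[of z] by (simp add: mult.assoc mult_left_mono)
  also have "\<dots> \<le> 1 * exp (b - t)"
    using v'_mult_u_le[of z] z by (intro mult_mono) auto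
  finally show ?thesis using \<open>a < b\<close> by (simp add: mult_left_mono)
qed simp

text \<open>For x \<in> {a..b}, exp (b - a - \<bar>x - t\<bar>) is an upper bound for exp (- infdist t {a..b}).\<close>
lemma green_increment_le:
  assumes "a \<le> b" "x \<in> {a..b}"
  shows "\<bar>green u v b t - green u v a t\<bar> \<le> (b - a) * exp (b - a - \<bar>x - t\<bar>)"
proof -
  consider "t \<le> a" | "b < t" | "a < t" "t \<le> b" by linarith
  then show ?thesis
  proof cases
    case 1
    then have "\<bar>green u v b t - green u v a t\<bar> = \<bar>u b - u a\<bar> * v t"
      using assms v_pos[of t] by (simp add: green_def abs_mult flip: left_diff_distrib)
    also have "\<dots> \<le> (b - a) * exp (t - a)"
      using u_increment_mult_v_le 1 assms by simp
    also have "\<dots> \<le> (b - a) * exp (b - a - \<bar>x - t\<bar>)"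
      using 1 assms by (intro mult_left_mono) auto
    finally show ?thesis .
  next
    case 2
    then have "\<bar>green u v b t - green u v a t\<bar> = \<bar>v b - v a\<bar> * u t"
      using assms u_pos[of t] by (simp add: green_def abs_mult mult.commute flip: right_diff_distrib)
    also have "\<dots> \<le> (b - a) * exp (b - t)"
      using v_increment_mult_u_le 2 assms by simp
    also have "\<dots> \<le> (b - a) * exp (b - a - \<bar>x - t\<bar>)"
      using 2 assms by (intro mult_left_mono) auto
    finally show ?thesis .
  next
    case 3
    then have "green u v b t - green u v a t = (u b - u t) * v t + (v t - v a) * u t"
      by (simp add: green_def algebra_simps)
    then have "\<bar>green u v b t - green u v a t\<bar> \<le> \<bar>u b - u t\<bar> * v t + \<bar>v t - v a\<bar> * u t"
      using u_pos[of t] v_pos[of t] abs_triangle_ineq[of "(u b - u t) * v t" "(v t - v a) * u t"]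
      by (simp add: abs_mult)
    also have "\<dots> \<le> (b - t) + (t - a)"
      using u_increment_mult_v_le[of t t b] v_increment_mult_u_le[of a t t] 3 by (intro add_mono) auto
    also have "\<dots> \<le> (b - a) * exp (b - a - \<bar>x - t\<bar>)"
      using 3 assms by (simp add: abs_le_iff)
    finally show ?thesis .
  qed
qed

lemma green_lipschitz:
  assumes "\<bar>y - x\<bar> \<le> 1"
  shows "\<bar>green u v y t - green u v x t\<bar> \<le> exp 1 * \<bar>y - x\<bar> * exp (- \<bar>x - t\<bar>)"
proof -
  have "\<bar>green u v (max x y) t - green u v (min x y) t\<bar>
      \<le> (max x y - min x y) * exp (max x y - min x y - \<bar>x - t\<bar>)"
    by (rule green_increment_le) auto
  also have "\<dots> \<le> \<bar>y - x\<bar> * exp (1 - \<bar>x - t\<bar>)"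
    using assms by (intro mult_mono) auto
  finally show ?thesis
    by (cases "x \<le> y") (auto simp: abs_minus_commute exp_diff exp_minus field_simps)
qed

lemma green_has_real_derivative:
  assumes "t \<noteq> x"
  shows "((\<lambda>y. green u v y t) has_real_derivative green_dx u u' v v' x t) (at x)"
proof (cases "t < x")
  case True
  have "\<forall>\<^sub>F y in nhds x. green u v y t = u y * v t"
    using eventually_nhds_in_open[of "{t<..}" x] True by (auto simp: green_def elim!: eventually_mono)
  moreover have "((\<lambda>y. u y * v t) has_real_derivative u' x * v t) (at x)"
    by (intro DERIV_cmult_right u_deriv)
  ultimately show ?thesis
    using True by (subst DERIV_cong_ev[OF refl _ refl]) (auto simp: green_dx_def)
next
  case False
  then have "x < t" using assms by simp
  have "\<forall>\<^sub>F y in nhds x. green u v y t = u t * v y"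
    using eventually_nhds_in_open[of "{..<t}" x] \<open>x < t\<close> by (auto simp: green_def elim!: eventually_mono)
  moreover have "((\<lambda>y. u t * v y) has_real_derivative u t * v' x) (at x)"
    by (intro DERIV_cmult v_deriv)
  ultimately show ?thesis
    using \<open>x < t\<close> by (subst DERIV_cong_ev[OF refl _ refl]) (auto simp: green_dx_def)
qed

lemma green_measurable [measurable]: "green u v x \<in> borel_measurable borel"
  and green_dx_measurable [measurable]: "green_dx u u' v v' x \<in> borel_measurable borel"
  unfolding green_def[abs_def] green_dx_def[abs_def] by measurable

lemma green_op_has_real_derivative:
  assumes [measurable]: "f \<in> borel_measurable borel"
    and conv: "\<And>x. integrable lborel (\<lambda>t. exp (- \<bar>x - t\<bar>) * \<bar>f t\<bar>)"
  shows "(green_op u v f has_real_derivative (LINT t|lborel. green_dx u u' v v' x t * f t)) (at x)"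
proof -
  define s where "s y t = (green u v y t * f t - green u v x t * f t) / (y - x)" for y t
  have "integrable lborel (\<lambda>t. green u v y t * f t)" for y
    using integrable_mult_dominated(1)[OF _ _ conv abs_green_le] by simp
  then have quotient: "(green_op u v f y - green_op u v f x) / (y - x) = (LINT t|lborel. s y t)" for y
    unfolding s_def green_op_def by simp
  have "((\<lambda>y. LINT t|lborel. s y t) \<longlongrightarrow> (LINT t|lborel. green_dx u u' v v' x t * f t)) (at x)"
  proof (rule integral_dominated_convergence_at[where w = "\<lambda>t. exp 1 * exp (- \<bar>x - t\<bar>) * \<bar>f t\<bar>"])
    show "s y \<in> borel_measurable lborel" for y
      unfolding s_def by measurable
    show "integrable lborel (\<lambda>t. exp 1 * exp (- \<bar>x - t\<bar>) * \<bar>f t\<bar>)"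
      using conv[of x] by (simp add: mult.assoc)
    show "AE t in lborel. ((\<lambda>y. s y t) \<longlongrightarrow> green_dx u u' v v' x t * f t) (at x)"
      using AE_lborel_singleton[of x]
    proof eventually_elim
      case (elim t)
      then show ?case
        using DERIV_cmult_right[OF green_has_real_derivative[of t x], of "f t"]
        unfolding s_def has_field_derivative_iff by (simp add: left_diff_distrib)
    qed
    have "\<forall>\<^sub>F y in at x. \<bar>y - x\<bar> \<le> 1 \<and> y \<noteq> x"
      unfolding eventually_at by (rule exI[of _ 1]) (auto simp: dist_real_def)
    then show "\<forall>\<^sub>F y in at x. \<forall>t. \<bar>s y t\<bar> \<le> exp 1 * exp (- \<bar>x - t\<bar>) * \<bar>f t\<bar>"
    proof (eventually_elim, intro allI)
      case (elim y)
      fix t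
      have "\<bar>s y t\<bar> = \<bar>green u v y t - green u v x t\<bar> / \<bar>y - x\<bar> * \<bar>f t\<bar>"
        unfolding s_def by (simp add: abs_mult flip: left_diff_distrib)
      also have "\<dots> \<le> exp 1 * exp (- \<bar>x - t\<bar>) * \<bar>f t\<bar>"
        using green_lipschitz[of y x t] elim by (intro mult_right_mono) (simp_all add: divide_le_eq mult_ac)
      finally show "\<bar>s y t\<bar> \<le> exp 1 * exp (- \<bar>x - t\<bar>) * \<bar>f t\<bar>" .
    qed
  qed simp
  then show ?thesis
    unfolding has_field_derivative_iff quotient .
qed

end

lemma abs_le_add_powr:
  fixes a p e :: real
  assumes "1 \<le> p" "0 < e"
  shows "\<bar>a\<bar> \<le> e + e powr (1 - p) * \<bar>a\<bar> powr p"
proof (cases "\<bar>a\<bar> \<le> e")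
  case True
  then show ?thesis
    by (smt (verit) mult_nonneg_nonneg powr_ge_zero)
next
  case False
  have "\<bar>a\<bar> = e powr (1 - p) * (\<bar>a\<bar> * e powr (p - 1))"
    using assms by (simp add: powr_add[symmetric] mult.left_commute)
  also have "\<dots> \<le> e powr (1 - p) * (\<bar>a\<bar> * \<bar>a\<bar> powr (p - 1))"
    using False assms by (intro mult_left_mono powr_mono2) auto
  also have "\<bar>a\<bar> * \<bar>a\<bar> powr (p - 1) = \<bar>a\<bar> powr p"
    using False assms by (simp add: powr_diff)
  finally show ?thesis
    using assms by simp
qed

lemma integrable_exp_conv:
  fixes g :: "real \<Rightarrow> real"
  assumes g: "integrable lborel g"
  shows "integrable lborel (\<lambda>t. exp (- \<bar>x - t\<bar>) * g t)"
proof (rule Bochner_Integration.integrable_bound[OF g])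
  have [measurable]: "g \<in> borel_measurable borel"
    using g by auto
  show "(\<lambda>t. exp (- \<bar>x - t\<bar>) * g t) \<in> borel_measurable lborel"
    by measurable
  show "AE t in lborel. norm (exp (- \<bar>x - t\<bar>) * g t) \<le> norm (g t)"
    by (intro AE_I2) (simp add: abs_mult mult_left_le_one_le)
qed

lemma exp_conv_tendsto_0:
  fixes g :: "real \<Rightarrow> real"
  assumes g: "integrable lborel g"
  shows "((\<lambda>x. LINT t|lborel. exp (- \<bar>x - t\<bar>) * g t) \<longlongrightarrow> 0) at_infinity"
proof -
  have g_measurable [measurable]: "g \<in> borel_measurable borel"
    using g by auto
  have "((\<lambda>y. exp (- \<bar>y - t\<bar>) * g t) \<longlongrightarrow> 0) at_top"
    and "((\<lambda>y. exp (- \<bar>- y - t\<bar>) * g t) \<longlongrightarrow> 0) at_top" for t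
    by real_asymp+
  then have "((\<lambda>x. LINT t|lborel. exp (- \<bar>x - t\<bar>) * g t) \<longlongrightarrow> 0) at_top"
    and "((\<lambda>x. LINT t|lborel. exp (- \<bar>- x - t\<bar>) * g t) \<longlongrightarrow> 0) at_top"
    using integral_dominated_convergence_at_top[where s = "\<lambda>x t. exp (- \<bar>x - t\<bar>) * g t"
        and f = "\<lambda>t. 0" and w = "\<lambda>t. \<bar>g t\<bar>" and M = lborel]
      integral_dominated_convergence_at_top[where s = "\<lambda>x t. exp (- \<bar>- x - t\<bar>) * g t"
        and f = "\<lambda>t. 0" and w = "\<lambda>t. \<bar>g t\<bar>" and M = lborel] g
    by (simp_all add: abs_mult mult_left_le_one_le)
  then show ?thesis
    unfolding at_infinity_eq_at_top_bot by (intro filterlim_sup) (simp_all add: filterlim_at_bot_mirror)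
qed

context
  fixes p :: real and f :: "real \<Rightarrow> real"
  assumes p: "1 \<le> p" and f: "in_Lp p f"
begin

lemma in_Lp_measurable [measurable]: "f \<in> borel_measurable borel"
  and in_Lp_integrable_powr: "integrable lborel (\<lambda>t. \<bar>f t\<bar> powr p)"
  using f unfolding in_Lp_def by simp_all

lemma in_Lp_integrable_exp_conv: "integrable lborel (\<lambda>t. exp (- \<bar>x - t\<bar>) * \<bar>f t\<bar>)"
proof (rule Bochner_Integration.integrable_bound)
  show "integrable lborel (\<lambda>t. exp (- \<bar>x - t\<bar>) + exp (- \<bar>x - t\<bar>) * \<bar>f t\<bar> powr p)"
    by (intro Bochner_Integration.integrable_add integrable_exp_neg_abs_diff
        integrable_exp_conv in_Lp_integrable_powr)
  show "AE t in lborel. norm (exp (- \<bar>x - t\<bar>) * \<bar>f t\<bar>)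
      \<le> norm (exp (- \<bar>x - t\<bar>) + exp (- \<bar>x - t\<bar>) * \<bar>f t\<bar> powr p)"
  proof (intro AE_I2)
    fix t
    show "norm (exp (- \<bar>x - t\<bar>) * \<bar>f t\<bar>) \<le> norm (exp (- \<bar>x - t\<bar>) + exp (- \<bar>x - t\<bar>) * \<bar>f t\<bar> powr p)"
      using mult_left_mono[OF abs_le_add_powr[OF p zero_less_one, of "f t"], of "exp (- \<bar>x - t\<bar>)"]
      by (simp add: distrib_left)
  qed
qed simp

lemma in_Lp_exp_conv_le:
  assumes "0 < e"
  shows "(LINT t|lborel. exp (- \<bar>x - t\<bar>) * \<bar>f t\<bar>)
    \<le> e * (LINT s|lborel. exp (- \<bar>s\<bar>))
      + e powr (1 - p) * (LINT t|lborel. exp (- \<bar>x - t\<bar>) * \<bar>f t\<bar> powr p)"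
proof -
  have "(LINT t|lborel. exp (- \<bar>x - t\<bar>) * \<bar>f t\<bar>)
      \<le> (LINT t|lborel. e * exp (- \<bar>x - t\<bar>) + e powr (1 - p) * (exp (- \<bar>x - t\<bar>) * \<bar>f t\<bar> powr p))"
  proof (rule integral_mono)
    show "integrable lborel (\<lambda>t. e * exp (- \<bar>x - t\<bar>) + e powr (1 - p) * (exp (- \<bar>x - t\<bar>) * \<bar>f t\<bar> powr p))"
      by (intro Bochner_Integration.integrable_add integrable_mult_right integrable_exp_neg_abs_diff
          integrable_exp_conv in_Lp_integrable_powr)
    show "exp (- \<bar>x - t\<bar>) * \<bar>f t\<bar> \<le> e * exp (- \<bar>x - t\<bar>) + e powr (1 - p) * (exp (- \<bar>x - t\<bar>) * \<bar>f t\<bar> powr p)" for t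
      using mult_left_mono[OF abs_le_add_powr[OF p assms, of "f t"], of "exp (- \<bar>x - t\<bar>)"]
      by (simp add: algebra_simps)
  qed (rule in_Lp_integrable_exp_conv)
  also have "\<dots> = e * (LINT s|lborel. exp (- \<bar>s\<bar>))
      + e powr (1 - p) * (LINT t|lborel. exp (- \<bar>x - t\<bar>) * \<bar>f t\<bar> powr p)"
    by (simp add: integrable_exp_neg_abs_diff integrable_exp_conv in_Lp_integrable_powr
        integral_exp_neg_abs_diff)
  finally show ?thesis .
qed

lemma in_Lp_exp_conv_tendsto_0:
  "((\<lambda>x. LINT t|lborel. exp (- \<bar>x - t\<bar>) * \<bar>f t\<bar>) \<longlongrightarrow> 0) at_infinity"
proof (rule tendstoI)
  fix d :: real
  assume "0 < d"
  define c where "c = (LINT s|lborel. exp (- \<bar>s::real\<bar>))"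
  define e where "e = d / (2 * (c + 1))"
  have "0 \<le> c"
    unfolding c_def by (rule integral_nonneg_AE) auto
  then have "0 < e" and "e * c < d / 2"
    using \<open>0 < d\<close> by (auto simp: e_def field_simps)
  have "((\<lambda>x. e powr (1 - p) * (LINT t|lborel. exp (- \<bar>x - t\<bar>) * \<bar>f t\<bar> powr p)) \<longlongrightarrow> 0) at_infinity"
    by (intro tendsto_mult_right_zero exp_conv_tendsto_0 in_Lp_integrable_powr)
  then have "\<forall>\<^sub>F x in at_infinity. e powr (1 - p) * (LINT t|lborel. exp (- \<bar>x - t\<bar>) * \<bar>f t\<bar> powr p) < d / 2"
    using \<open>0 < d\<close> by (auto dest: order_tendstoD(2)[where a = "d / 2"])
  then show "\<forall>\<^sub>F x in at_infinity. dist (LINT t|lborel. exp (- \<bar>x - t\<bar>) * \<bar>f t\<bar>) 0 < d"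
  proof eventually_elim
    case (elim x)
    have "0 \<le> (LINT t|lborel. exp (- \<bar>x - t\<bar>) * \<bar>f t\<bar>)"
      by (rule integral_nonneg_AE) auto
    then show ?case
      using in_Lp_exp_conv_le[OF \<open>0 < e\<close>, of x] elim \<open>e * c < d / 2\<close> unfolding c_def by simp
  qed
qed

end

theorem lemma3p4:
  fixes q u u' v v' f :: "real \<Rightarrow> real" and p :: real
  assumes "admissible_potential q"
    and "PFSS q u u' v v'"
    and "1 \<le> p"
    and "in_Lp p f"
  shows "(\<forall>x. integrable lborel (\<lambda>t. green u v x t * f t)) \<and>
         (green_op u v f \<longlongrightarrow> 0) at_infinity \<and>
         (\<forall>x. green_op u v f differentiable at x) \<and>
         ((\<lambda>x. deriv (green_op u v f) x) \<longlongrightarrow> 0) at_infinity"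
proof -
  interpret principal_system q u u' v v'
    using assms(1,2) by unfold_locales
  note f = in_Lp_measurable[OF assms(3,4)]
  note conv = in_Lp_integrable_exp_conv[OF assms(3,4)]
  note decay = in_Lp_exp_conv_tendsto_0[OF assms(3,4)]
  note green_bound = integrable_mult_dominated[OF green_measurable f conv abs_green_le]
  note green_dx_bound = integrable_mult_dominated[OF green_dx_measurable f conv abs_green_dx_le]
  note deriv = green_op_has_real_derivative[OF f conv]
  show ?thesis
  proof (intro conjI allI)
    show "integrable lborel (\<lambda>t. green u v x t * f t)" for x
      by (rule green_bound(1))
    show "(green_op u v f \<longlongrightarrow> 0) at_infinity"
      using always_eventually decay
      by (rule Lim_null_comparison) (simp add: green_op_def green_bound(2))
    show "green_op u v f differentiable at x" for x
      using deriv real_differentiable_def by blast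
    show "((\<lambda>x. deriv (green_op u v f) x) \<longlongrightarrow> 0) at_infinity"
      using always_eventually decay
      by (rule Lim_null_comparison) (simp add: DERIV_imp_deriv[OF deriv] green_dx_bound(2))
  qed
qed

end
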